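(* Let $f:\mathbb{R}^n\to\mathbb{R}$ be continuous with bounded lower-level sets, and let $\gamma_k>0$, $\delta_k>0$ with $\gamma_k\delta_k\le c$ for all $k$ and some $c>0$. Then, for arbitrary $\hat x\in X$, all $k$, and every $x_k^*\in X_k^*$, $$\mathrm{dist}(x_k^*,X)\le\frac{m\beta}{\gamma_k}\big(f(\hat x)-f(x_k^* )\big)+\frac{m\beta\,\delta_k}{4\alpha_{\min}}.$$ In particular, if $\gamma_k\to\infty$ and $\delta_k\to0$, then $\lim_{k\to\infty}\mathrm{dist}(x_k^*,X)=0$, with convergence rate of order $O(\gamma_k^{-1}+\delta_k)$.
   Context: Let $a_1,\dots,a_m\in\mathbb{R}^n$ be nonzero vectors and $b_1,\dots,b_m\in\mathbb{R}$; $X_i=\{x:\langle a_i,x\rangle-b_i\le0\}$, $X=\bigcap_{i=1}^mX_i$ (assumed nonempty), $\alpha_{\min}=\min_i\|a_i\|$, and $\mathrm{dist}(x,Y)$ is the Euclidean distance from $x$ to $Y$. $\beta>0$ is a Hoffman constant: a scalar such that $\beta\sum_{i=1}^m\mathrm{dist}(x,X_i)\ge\mathrm{dist}(x,X)$ for all $x\in\mathbb{R}^n$ (such a scalar exists). For $\delta>0$, nonzero $a$ and scalar $b$: $h_\delta(x;a,b)=\frac{\langle a,x\rangle-b}{\|a\|}$ if $\langle a,x\rangle-b>\delta$, $\frac{(\langle a,x\rangle-b+\delta)^2}{4\delta\|a\|}$ if $-\delta\le\langle a,x\rangle-b\le\delta$, $0$ if $\langle a,x\rangle-b<-\delta$.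 For each $k$, $F_k(x)=f(x)+\frac{\gamma_k}{m}\sum_{i=1}^m h_{\delta_k}(x;a_i,b_i)$, and $X_k^*$ is the set of minimizers of $F_k$ over $\mathbb{R}^n$. *)

theory Defs
  imports "HOL-Analysis.Analysis" "HOL-Library.Landau_Symbols"
begin

definition hdelta :: "real \<Rightarrow> real^'n \<Rightarrow> real \<Rightarrow> real^'n \<Rightarrow> real" where
  "hdelta \<delta> a b x =
     (let t = a \<bullet> x - b in
      if t > \<delta> then t / norm a
      else if - \<delta> \<le> t then (t + \<delta>)^2 / (4 * \<delta> * norm a)
      else 0)"

definition halfspace :: "real^'n \<Rightarrow> real \<Rightarrow> (real^'n) set" where
  "halfspace a b = {x. a \<bullet> x - b \<le> 0}"

definition Fpen :: "(real^'n \<Rightarrow> real) \<Rightarrow> (nat \<Rightarrow> real^'n) \<Rightarrow> (nat \<Rightarrow> real) \<Rightarrow> nat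
                    \<Rightarrow> real \<Rightarrow> real \<Rightarrow> real^'n \<Rightarrow> real" where
  "Fpen f a b m \<gamma> \<delta> x = f x + \<gamma> / real m * (\<Sum>i\<in>{1..m}. hdelta \<delta> (a i) (b i) x)"

definition minimizers :: "(real^'n \<Rightarrow> real) \<Rightarrow> (real^'n) set" where
  "minimizers F = {x. \<forall>y. F x \<le> F y}"

end

theory Submission
  imports Defs
begin

text \<open>
  Each smoothed penalty is squeezed between two quantities: on its half-space it is at most
  \<open>\<delta> / (4 \<parallel>a\<parallel>)\<close>, and everywhere it dominates the distance \<open>(\<langle>a, x\<rangle> - b)\<^sub>+ / \<parallel>a\<parallel>\<close> to the
  half-space, because \<open>(t + \<delta>)\<^sup>2 \<ge> 4 \<delta> t\<close>. Comparing \<open>F\<^sub>k\<close> at a minimizer with \<open>F\<^sub>k\<close> at a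
  feasible point and applying the Hoffman bound gives the distance estimate. As \<open>f\<close> is continuous
  with bounded sublevel sets, it attains its minimum, so the difference of the \<open>f\<close>-values in that
  estimate is bounded uniformly in \<open>k\<close>, which gives the rate \<open>O(1/\<gamma>\<^sub>k + \<delta>\<^sub>k)\<close>.
\<close>

lemma hdelta_le_on_halfspace:
  assumes "\<delta> > 0" "a \<noteq> 0" "x \<in> halfspace a b"
  shows "hdelta \<delta> a b x \<le> \<delta> / (4 * norm a)"
proof -
  define t where "t = a \<bullet> x - b"
  have "t \<le> 0" using assms(3) by (simp add: halfspace_def t_def)
  have "norm a > 0" using assms(2) by simp
  show ?thesis
  proof (cases "- \<delta> \<le> t")
    case True
    have "(t + \<delta>)^2 \<le> \<delta>^2"
      using True \<open>t \<le> 0\<close> by (intro power_mono) auto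
    then have "(t + \<delta>)^2 / (4 * \<delta> * norm a) \<le> \<delta>^2 / (4 * \<delta> * norm a)"
      using \<open>norm a > 0\<close> assms(1) by (intro divide_right_mono) auto
    also have "\<dots> = \<delta> / (4 * norm a)"
      using assms(1) by (simp add: power2_eq_square)
    finally show ?thesis
      using True \<open>t \<le> 0\<close> assms(1) by (simp add: hdelta_def Let_def flip: t_def)
  next
    case False
    then show ?thesis
      using \<open>t \<le> 0\<close> assms(1) by (simp add: hdelta_def Let_def flip: t_def)
  qed
qed

lemma infdist_halfspace_le:
  assumes "a \<noteq> 0"
  shows "infdist x (halfspace a b) \<le> max (a \<bullet> x - b) 0 / norm a"
proof (cases "a \<bullet> x - b \<le> 0")
  case True
  then show ?thesis by (simp add: halfspace_def)
next
  case False
  define t where "t = a \<bullet> x - b"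
  define y where "y = x - (t / (norm a)^2) *\<^sub>R a"
  have "norm a > 0" using assms by simp
  have "a \<bullet> y - b = t - (t / (norm a)^2) * (a \<bullet> a)"
    by (simp add: y_def t_def algebra_simps)
  also have "\<dots> = 0"
    using \<open>norm a > 0\<close> by (simp flip: power2_norm_eq_inner)
  finally have "y \<in> halfspace a b" by (simp add: halfspace_def)
  then have "infdist x (halfspace a b) \<le> dist x y" by (rule infdist_le)
  also have "\<dots> = t / norm a"
    using False \<open>norm a > 0\<close> by (simp add: y_def dist_norm t_def power2_eq_square)
  finally show ?thesis using False by (simp add: t_def)
qed

lemma infdist_halfspace_le_hdelta:
  assumes "\<delta> > 0" "a \<noteq> 0"
  shows "infdist x (halfspace a b) \<le> hdelta \<delta> a b x"
proof -
  define t where "t = a \<bullet> x - b"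
  have "norm a > 0" using assms(2) by simp
  have "max t 0 / norm a \<le> hdelta \<delta> a b x"
  proof (cases "- \<delta> \<le> t \<and> t \<le> \<delta>")
    case True
    have "max t 0 * (4 * \<delta>) \<le> (t + \<delta>)^2"
    proof (cases "t \<ge> 0")
      case True
      have "0 \<le> (t - \<delta>)^2" by simp
      then show ?thesis using True by (simp add: power2_eq_square algebra_simps)
    qed simp
    then have "max t 0 \<le> (t + \<delta>)^2 / (4 * \<delta>)"
      using assms(1) pos_le_divide_eq[of "4 * \<delta>" "max t 0" "(t + \<delta>)^2"] by linarith
    then have "max t 0 / norm a \<le> (t + \<delta>)^2 / (4 * \<delta>) / norm a"
      using \<open>norm a > 0\<close> by (intro divide_right_mono) auto
    then show ?thesis
      using True by (auto simp: hdelta_def Let_def mult.commute simp flip: t_def)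
  next
    case False
    then show ?thesis
      using assms by (auto simp: hdelta_def Let_def simp flip: t_def)
  qed
  then show ?thesis
    using infdist_halfspace_le[OF assms(2), of x b] by (simp add: t_def)
qed

lemma sum_hdelta_le_on_polyhedron:
  assumes a_nz: "\<And>i. i \<in> {1..m} \<Longrightarrow> a i \<noteq> 0" and "\<delta> > 0"
    and x: "x \<in> (\<Inter>i\<in>{1..m}. halfspace (a i) (b i))"
  shows "(\<Sum>i\<in>{1..m}. hdelta \<delta> (a i) (b i) x)
           \<le> real m * \<delta> / (4 * Min ((\<lambda>i. norm (a i)) ` {1..m}))"
proof (cases "m = 0")
  case False
  define A where "A = Min ((\<lambda>i. norm (a i)) ` {1..m})"
  have "A \<in> (\<lambda>i. norm (a i)) ` {1..m}"
    unfolding A_def using False by (intro Min_in) auto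
  then have "A > 0" using a_nz by auto
  have "(\<Sum>i\<in>{1..m}. hdelta \<delta> (a i) (b i) x) \<le> (\<Sum>i\<in>{1..m}. \<delta> / (4 * A))"
  proof (rule sum_mono)
    fix i assume i: "i \<in> {1..m}"
    have "hdelta \<delta> (a i) (b i) x \<le> \<delta> / (4 * norm (a i))"
      using hdelta_le_on_halfspace[OF \<open>\<delta> > 0\<close> a_nz[OF i]] x i by auto
    also have "\<dots> \<le> \<delta> / (4 * A)"
      using \<open>A > 0\<close> \<open>\<delta> > 0\<close> i unfolding A_def by (intro divide_left_mono) auto
    finally show "hdelta \<delta> (a i) (b i) x \<le> \<delta> / (4 * A)" .
  qed
  then show ?thesis by (simp add: A_def)
qed simp

lemma sum_hdelta_at_minimizer_le:
  assumes "xs \<in> minimizers (Fpen f a b m \<gamma> \<delta>)" "\<gamma> > 0"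
  shows "(\<Sum>i\<in>{1..m}. hdelta \<delta> (a i) (b i) xs)
           \<le> real m / \<gamma> * (f y - f xs) + (\<Sum>i\<in>{1..m}. hdelta \<delta> (a i) (b i) y)"
proof (cases "m = 0")
  case False
  define S where "S = (\<lambda>x. \<Sum>i\<in>{1..m}. hdelta \<delta> (a i) (b i) x)"
  have "f xs + \<gamma> / real m * S xs \<le> f y + \<gamma> / real m * S y"
    using assms(1) by (simp add: minimizers_def Fpen_def S_def)
  then have "real m / \<gamma> * (\<gamma> / real m * S xs) \<le> real m / \<gamma> * (f y - f xs + \<gamma> / real m * S y)"
    using \<open>\<gamma> > 0\<close> by (intro mult_left_mono) auto
  then show ?thesis
    using False \<open>\<gamma> > 0\<close> by (simp add: S_def distrib_left)
qed simp

lemma infdist_polyhedron_at_minimizer_le: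
  assumes a_nz: "\<And>i. i \<in> {1..m} \<Longrightarrow> a i \<noteq> 0" and "\<beta> > 0"
    and hoffman: "\<And>x. \<beta> * (\<Sum>i\<in>{1..m}. infdist x (halfspace (a i) (b i)))
                        \<ge> infdist x (\<Inter>i\<in>{1..m}. halfspace (a i) (b i))"
    and "\<gamma> > 0" "\<delta> > 0"
    and xh: "xh \<in> (\<Inter>i\<in>{1..m}. halfspace (a i) (b i))"
    and xs: "xs \<in> minimizers (Fpen f a b m \<gamma> \<delta>)"
  shows "infdist xs (\<Inter>i\<in>{1..m}. halfspace (a i) (b i))
           \<le> real m * \<beta> / \<gamma> * (f xh - f xs)
              + real m * \<beta> * \<delta> / (4 * Min ((\<lambda>i. norm (a i)) ` {1..m}))"
proof -
  define S where "S = (\<lambda>x. \<Sum>i\<in>{1..m}. hdelta \<delta> (a i) (b i) x)"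
  have "(\<Sum>i\<in>{1..m}. infdist xs (halfspace (a i) (b i))) \<le> S xs"
    unfolding S_def by (intro sum_mono infdist_halfspace_le_hdelta \<open>\<delta> > 0\<close> a_nz) auto
  also have "S xs \<le> real m / \<gamma> * (f xh - f xs) + S xh"
    unfolding S_def using xs \<open>\<gamma> > 0\<close> by (rule sum_hdelta_at_minimizer_le)
  also have "S xh \<le> real m * \<delta> / (4 * Min ((\<lambda>i. norm (a i)) ` {1..m}))"
    unfolding S_def using a_nz \<open>\<delta> > 0\<close> xh by (rule sum_hdelta_le_on_polyhedron)
  finally have "\<beta> * (\<Sum>i\<in>{1..m}. infdist xs (halfspace (a i) (b i)))
      \<le> \<beta> * (real m / \<gamma> * (f xh - f xs) + real m * \<delta> / (4 * Min ((\<lambda>i. norm (a i)) ` {1..m})))"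
    using \<open>\<beta> > 0\<close> by (intro mult_left_mono) auto
  with hoffman[of xs] show ?thesis
    by (simp add: distrib_left ac_simps)
qed

lemma infdist_polyhedron_at_minimizer_le_uniform:
  assumes a_nz: "\<And>i. i \<in> {1..m} \<Longrightarrow> a i \<noteq> 0" and "\<beta> > 0"
    and hoffman: "\<And>x. \<beta> * (\<Sum>i\<in>{1..m}. infdist x (halfspace (a i) (b i)))
                        \<ge> infdist x (\<Inter>i\<in>{1..m}. halfspace (a i) (b i))"
    and "\<gamma> > 0" "\<delta> > 0"
    and xh: "xh \<in> (\<Inter>i\<in>{1..m}. halfspace (a i) (b i))"
    and xs: "xs \<in> minimizers (Fpen f a b m \<gamma> \<delta>)"
    and xmin: "\<And>y. f xmin \<le> f y"
  shows "infdist xs (\<Inter>i\<in>{1..m}. halfspace (a i) (b i))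
           \<le> max (real m * \<beta> * (f xh - f xmin)) (real m * \<beta> / (4 * Min ((\<lambda>i. norm (a i)) ` {1..m})))
              * (1 / \<gamma> + \<delta>)"
proof -
  define P where "P = real m * \<beta> * (f xh - f xmin)"
  define Q where "Q = real m * \<beta> / (4 * Min ((\<lambda>i. norm (a i)) ` {1..m}))"
  have "infdist xs (\<Inter>i\<in>{1..m}. halfspace (a i) (b i)) \<le> real m * \<beta> / \<gamma> * (f xh - f xs) + Q * \<delta>"
    using infdist_polyhedron_at_minimizer_le[OF a_nz assms(2-6) xs] by (simp add: Q_def)
  also have "\<dots> \<le> P * (1 / \<gamma>) + Q * \<delta>"
  proof -
    have "real m * \<beta> * (f xh - f xs) \<le> P"
      unfolding P_def using xmin[of xs] \<open>\<beta> > 0\<close> by (intro mult_left_mono) auto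
    then show ?thesis
      using divide_right_mono[OF _ less_imp_le[OF \<open>\<gamma> > 0\<close>]] by simp
  qed
  also have "\<dots> \<le> max P Q * (1 / \<gamma> + \<delta>)"
    unfolding distrib_left using \<open>\<gamma> > 0\<close> \<open>\<delta> > 0\<close> by (intro add_mono mult_right_mono) auto
  finally show ?thesis by (simp add: P_def Q_def)
qed

lemma continuous_bounded_sublevels_attains_min:
  fixes f :: "'a::heine_borel \<Rightarrow> real"
  assumes "continuous_on UNIV f" "\<And>t. bounded {x. f x \<le> t}"
  obtains x0 where "\<And>y. f x0 \<le> f y"
proof -
  fix z
  define K where "K = {x. f x \<le> f z}"
  have "compact K"
    unfolding K_def compact_eq_bounded_closed
    using assms by (auto intro: closed_Collect_le continuous_on_const)
  moreover have "z \<in> K" by (simp add: K_def)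
  ultimately obtain x0 where "x0 \<in> K" "\<forall>y\<in>K. f x0 \<le> f y"
    using continuous_attains_inf[of K f] continuous_on_subset[OF assms(1)] by blast
  then have "f x0 \<le> f y" for y
    by (cases "y \<in> K") (auto simp: K_def)
  then show thesis by (rule that)
qed

lemma tendsto_0_and_bigo_if_dominated:
  fixes u g :: "nat \<Rightarrow> real"
  assumes nonneg: "\<And>k. 0 \<le> u k" and dominated: "\<And>k. u k \<le> C * g k" and "g \<longlonglongrightarrow> 0"
  shows "u \<longlonglongrightarrow> 0 \<and> u \<in> O(g)"
proof
  have "\<forall>\<^sub>F k in sequentially. 0 \<le> u k" "\<forall>\<^sub>F k in sequentially. u k \<le> C * g k"
    using nonneg dominated by (simp_all add: always_eventually)
  moreover have "(\<lambda>k. C * g k) \<longlonglongrightarrow> 0"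
    using tendsto_mult_right_zero[OF \<open>g \<longlonglongrightarrow> 0\<close>] .
  ultimately show "u \<longlonglongrightarrow> 0"
    by (rule tendsto_sandwich[OF _ _ tendsto_const])
  have "norm (u k) \<le> \<bar>C\<bar> * norm (g k)" for k
    using nonneg[of k] dominated[of k] abs_ge_self[of "C * g k"] by (simp add: abs_mult)
  then show "u \<in> O(g)"
    by (intro bigoI always_eventually allI)
qed

theorem proposition5:
  fixes a :: "nat \<Rightarrow> real^'n" and b :: "nat \<Rightarrow> real" and m :: nat
    and f :: "real^'n \<Rightarrow> real" and \<beta> c :: real
    and \<gamma> \<delta> :: "nat \<Rightarrow> real"
  assumes a_nz: "\<And>i. i \<in> {1..m} \<Longrightarrow> a i \<noteq> 0"
    and X_ne: "(\<Inter>i\<in>{1..m}. halfspace (a i) (b i)) \<noteq> {}"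
    and \<beta>_pos: "\<beta> > 0"
    and hoffman: "\<And>x. \<beta> * (\<Sum>i\<in>{1..m}. infdist x (halfspace (a i) (b i)))
                        \<ge> infdist x (\<Inter>i\<in>{1..m}. halfspace (a i) (b i))"
    and f_cont: "continuous_on UNIV f"
    and f_lev: "\<And>t. bounded {x. f x \<le> t}"
    and c_pos: "c > 0"
    and \<gamma>_pos: "\<And>k. \<gamma> k > 0"
    and \<delta>_pos: "\<And>k. \<delta> k > 0"
    and \<gamma>\<delta>_le: "\<And>k. \<gamma> k * \<delta> k \<le> c"
  shows
    "(\<forall>xh \<in> (\<Inter>i\<in>{1..m}. halfspace (a i) (b i)). \<forall>k.
        \<forall>xs \<in> minimizers (Fpen f a b m (\<gamma> k) (\<delta> k)).
          infdist xs (\<Inter>i\<in>{1..m}. halfspace (a i) (b i))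
            \<le> real m * \<beta> / \<gamma> k * (f xh - f xs)
               + real m * \<beta> * \<delta> k / (4 * Min ((\<lambda>i. norm (a i)) ` {1..m})))
     \<and> (filterlim \<gamma> at_top sequentially \<and> \<delta> \<longlonglongrightarrow> 0 \<longrightarrow>
        (\<forall>xs :: nat \<Rightarrow> real^'n.
           (\<forall>k. xs k \<in> minimizers (Fpen f a b m (\<gamma> k) (\<delta> k))) \<longrightarrow>
             (\<lambda>k. infdist (xs k) (\<Inter>i\<in>{1..m}. halfspace (a i) (b i))) \<longlonglongrightarrow> 0
           \<and> (\<lambda>k. infdist (xs k) (\<Inter>i\<in>{1..m}. halfspace (a i) (b i)))
               \<in> O(\<lambda>k. 1 / \<gamma> k + \<delta> k)))"
proof -
  let ?X = "\<Inter>i\<in>{1..m}. halfspace (a i) (b i)"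
  obtain xh where xh: "xh \<in> ?X" using X_ne by blast
  obtain x0 where x0: "\<And>y. f x0 \<le> f y"
    using continuous_bounded_sublevels_attains_min[OF f_cont f_lev] by blast
  note estimate = infdist_polyhedron_at_minimizer_le[OF a_nz \<beta>_pos hoffman \<gamma>_pos \<delta>_pos]
  note uniform_estimate = infdist_polyhedron_at_minimizer_le_uniform[where f = f and xmin = x0,
      OF a_nz \<beta>_pos hoffman \<gamma>_pos \<delta>_pos xh _ x0]
  have "(\<lambda>k. 1 / \<gamma> k + \<delta> k) \<longlonglongrightarrow> 0"
    if "filterlim \<gamma> at_top sequentially" "\<delta> \<longlonglongrightarrow> 0"
    using tendsto_add[OF tendsto_inverse_0_at_top[OF that(1)] that(2)] by (simp add: divide_inverse)
  then have "(\<lambda>k. infdist (xs k) ?X) \<longlonglongrightarrow> 0 \<and> (\<lambda>k. infdist (xs k) ?X) \<in> O(\<lambda>k. 1 / \<gamma> k + \<delta> k)"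
    if "filterlim \<gamma> at_top sequentially \<and> \<delta> \<longlonglongrightarrow> 0"
      "\<forall>k. xs k \<in> minimizers (Fpen f a b m (\<gamma> k) (\<delta> k))" for xs
    using that by (intro tendsto_0_and_bigo_if_dominated[OF infdist_nonneg uniform_estimate]) auto
  with estimate show ?thesis by blast
qed

end
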